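(* Let $f$ be a bounded modulus function, $\beta\in(0,1]$, $m\ge0$ an integer, $\theta=(k_r)$ a lacunary sequence, and $p=(p_k)$ a sequence of positive reals with $0<h=\inf_kp_k\le p_k\le\sup_kp_k=H<\infty$. If $\lim_{r\to\infty}\frac{h_r}{h_r^\beta}=1$, then $S_\theta^\beta(F,\Delta^m)\subset w_p^\beta(\theta,f,F,\Delta^m)$.
   Context: A fuzzy number is a map $X:\mathbb{R}\to[0,1]$ which is normal, fuzzy convex, upper semicontinuous, with compact closure of $\{t:X(t)>0\}$; $L(\mathbb{R})$ is the set of fuzzy numbers. Level sets $[X]^\alpha=\{t:X(t)\ge\alpha\}$ ($\alpha\in(0,1]$), $[X]^0=\overline{\{t:X(t)>0\}}$, are compact intervals $[u^\alpha,v^\alpha]$. Subtraction: $[X-Y]^\alpha=[u_1^\alpha-v_2^\alpha,v_1^\alpha-u_2^\alpha]$. Metric: $d(X,Y)=\sup_{\alpha\in[0,1]}\max\{|u_1^\alpha-u_2^\alpha|,|v_1^\alpha-v_2^\alpha|\}$. $(\Delta^0X)_k=X_k$, $(\Delta^1X)_k=X_k-X_{k+1}$, $(\Delta^mX)_k=(\Delta^1(\Delta^{m-1}X))_k$. A lacunary sequence is an increasing integer sequence $\theta=(k_r)_{r\ge0}$ with $k_0=0$, $h_r=k_r-k_{r-1}\to\infty$; $I_r=(k_{r-1},k_r]$. A modulus function is $f:[0,\infty)\to[0,\infty)$ with $f(x)=0$ iff $x=0$, $f(x+y)\le f(x)+f(y)$, $f$ increasing, and $f$ right-continuous at $0$.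 $w_p^\beta(\theta,f,F,\Delta^m)$: sequences $X$ of fuzzy numbers with some $X_0\in L(\mathbb{R})$ such that $\lim_r\frac{1}{h_r^\beta}\sum_{k\in I_r}[f(d(\Delta^mX_k,X_0))]^{p_k}=0$. $S_\theta^\beta(F,\Delta^m)$: sequences $X$ with some $X_0\in L(\mathbb{R})$ such that for all $\varepsilon>0$, $\lim_r\frac{1}{h_r^\beta}|\{k\in I_r:d(\Delta^mX_k,X_0)\ge\varepsilon\}|=0$. *)

theory Defs
  imports "HOL-Analysis.Analysis"
begin

type_synonym fuzzy = "real \<Rightarrow> real"

definition fuzzy_number :: "fuzzy \<Rightarrow> bool" where
  "fuzzy_number X \<longleftrightarrow>
     (\<forall>t. 0 \<le> X t \<and> X t \<le> 1) \<and>
     (\<exists>t. X t = 1) \<and>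
     (\<forall>s t l. 0 \<le> l \<and> l \<le> 1 \<longrightarrow> min (X s) (X t) \<le> X (l * s + (1 - l) * t)) \<and>
     (\<forall>t a. X t < a \<longrightarrow> (\<forall>\<^sub>F s in at t. X s < a)) \<and>
     compact (closure {t. X t > 0})"

definition level :: "fuzzy \<Rightarrow> real \<Rightarrow> real set" where
  "level X \<alpha> = (if \<alpha> = 0 then closure {t. X t > 0} else {t. X t \<ge> \<alpha>})"

definition lev_lo :: "fuzzy \<Rightarrow> real \<Rightarrow> real" where
  "lev_lo X \<alpha> = Inf (level X \<alpha>)"

definition lev_hi :: "fuzzy \<Rightarrow> real \<Rightarrow> real" where
  "lev_hi X \<alpha> = Sup (level X \<alpha>)"

text \<open>Subtraction of fuzzy numbers, defined through its level sets
  [X - Y]^a = [u1^a - v2^a, v1^a - u2^a] for a in (0,1].\<close>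
definition fsub :: "fuzzy \<Rightarrow> fuzzy \<Rightarrow> fuzzy" where
  "fsub X Y t = Sup ({0} \<union> {\<alpha>. 0 < \<alpha> \<and> \<alpha> \<le> 1 \<and>
       lev_lo X \<alpha> - lev_hi Y \<alpha> \<le> t \<and> t \<le> lev_hi X \<alpha> - lev_lo Y \<alpha>})"

definition fdist :: "fuzzy \<Rightarrow> fuzzy \<Rightarrow> real" where
  "fdist X Y = (SUP \<alpha>\<in>{0..1}. max \<bar>lev_lo X \<alpha> - lev_lo Y \<alpha>\<bar> \<bar>lev_hi X \<alpha> - lev_hi Y \<alpha>\<bar>)"

fun fdelta :: "nat \<Rightarrow> (nat \<Rightarrow> fuzzy) \<Rightarrow> nat \<Rightarrow> fuzzy" where
  "fdelta 0 X k = X k"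
| "fdelta (Suc m) X k = fsub (fdelta m X k) (fdelta m X (Suc k))"

definition lacunary :: "(nat \<Rightarrow> nat) \<Rightarrow> bool" where
  "lacunary \<theta> \<longleftrightarrow> \<theta> 0 = 0 \<and> strict_mono \<theta> \<and>
     filterlim (\<lambda>r. real (\<theta> (Suc r) - \<theta> r)) at_top sequentially"

definition lac_h :: "(nat \<Rightarrow> nat) \<Rightarrow> nat \<Rightarrow> nat" where
  "lac_h \<theta> r = \<theta> r - \<theta> (r - 1)"

definition lac_I :: "(nat \<Rightarrow> nat) \<Rightarrow> nat \<Rightarrow> nat set" where
  "lac_I \<theta> r = {\<theta> (r - 1)<..\<theta> r}"

definition modulus :: "(real \<Rightarrow> real) \<Rightarrow> bool" where
  "modulus f \<longleftrightarrow>
     (\<forall>x\<ge>0. f x \<ge> 0) \<and>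
     (\<forall>x\<ge>0. f x = 0 \<longleftrightarrow> x = 0) \<and>
     (\<forall>x\<ge>0. \<forall>y\<ge>0. f (x + y) \<le> f x + f y) \<and>
     mono_on {0..} f \<and>
     (f \<longlongrightarrow> 0) (at_right 0)"

definition fuzzy_seq :: "(nat \<Rightarrow> fuzzy) \<Rightarrow> bool" where
  "fuzzy_seq X \<longleftrightarrow> (\<forall>k. fuzzy_number (X k))"

definition w_space :: "real \<Rightarrow> (nat \<Rightarrow> real) \<Rightarrow> (nat \<Rightarrow> nat) \<Rightarrow> (real \<Rightarrow> real) \<Rightarrow> nat
    \<Rightarrow> (nat \<Rightarrow> fuzzy) set" where
  "w_space \<beta> p \<theta> f m = {X. fuzzy_seq X \<and> (\<exists>X0. fuzzy_number X0 \<and>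
     (\<lambda>r. (1 / real (lac_h \<theta> r) powr \<beta>) *
        (\<Sum>k\<in>lac_I \<theta> r. f (fdist (fdelta m X k) X0) powr p k)) \<longlonglongrightarrow> 0)}"

definition S_space :: "real \<Rightarrow> (nat \<Rightarrow> nat) \<Rightarrow> nat \<Rightarrow> (nat \<Rightarrow> fuzzy) set" where
  "S_space \<beta> \<theta> m = {X. fuzzy_seq X \<and> (\<exists>X0. fuzzy_number X0 \<and>
     (\<forall>\<epsilon>>0. (\<lambda>r. real (card {k\<in>lac_I \<theta> r. fdist (fdelta m X k) X0 \<ge> \<epsilon>})
                   / real (lac_h \<theta> r) powr \<beta>) \<longlonglongrightarrow> 0))}"

end

theory Submission
  imports Defs
begin

text \<open>Write \<open>d\<^sub>k\<close> for the distance of \<open>\<Delta>\<^sup>m X\<^sub>k\<close> to the limit \<open>X\<^sub>0\<close>.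
  Fix \<open>\<delta> > 0\<close>. Terms with \<open>d\<^sub>k \<ge> \<delta>\<close> contribute at most \<open>max 1 M powr H\<close> each, where \<open>M\<close>
  bounds \<open>f\<close>, and statistical convergence makes their number negligible against \<open>h\<^sub>r\<^sup>\<beta>\<close>.
  The remaining terms are at most \<open>f \<delta> powr inf p\<close> each, so they contribute at most
  \<open>(h\<^sub>r / h\<^sub>r\<^sup>\<beta>) \<cdot> f \<delta> powr inf p\<close>; the ratio stays bounded and \<open>f \<delta> \<rightarrow> 0\<close> as \<open>\<delta> \<rightarrow> 0\<close>.
  The only fuzzy-number fact needed is that distances are nonnegative, which requires the
  level sets of all differences \<open>\<Delta>\<^sup>m X\<^sub>k\<close> to be bounded.\<close>

definition bounded_levels :: "fuzzy \<Rightarrow> bool" where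
  "bounded_levels Z \<longleftrightarrow> (\<exists>C. \<forall>\<alpha>\<in>{0..1}. level Z \<alpha> \<subseteq> {-C..C})"

text \<open>\<open>Inf {}\<close> and \<open>Sup {}\<close> are unspecified reals, hence the extra term in the bound.\<close>
lemma abs_Inf_le_if_subset_interval:
  fixes S :: "real set"
  assumes "S \<subseteq> {-B..B}"
  shows "\<bar>Inf S\<bar> \<le> max \<bar>Inf ({}::real set)\<bar> B"
proof (cases "S = {}")
  case False
  then obtain x where x: "x \<in> S" by blast
  have "bdd_below S" using assms by (auto intro!: bdd_belowI[where m="-B"])
  then have "Inf S \<le> B" using cInf_lower[OF x] x assms by fastforce
  moreover have "-B \<le> Inf S" using False assms by (auto intro!: cInf_greatest)
  ultimately show ?thesis by auto
qed simp

lemma abs_Sup_le_if_subset_interval: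
  fixes S :: "real set"
  assumes "S \<subseteq> {-B..B}"
  shows "\<bar>Sup S\<bar> \<le> max \<bar>Sup ({}::real set)\<bar> B"
proof (cases "S = {}")
  case False
  then obtain x where x: "x \<in> S" by blast
  have "bdd_above S" using assms by (auto intro!: bdd_aboveI[where M=B])
  then have "-B \<le> Sup S" using cSup_upper[OF x] x assms by fastforce
  moreover have "Sup S \<le> B" using False assms by (auto intro!: cSup_least)
  ultimately show ?thesis by auto
qed simp

lemma bounded_levels_lev_bounds:
  assumes "bounded_levels Z"
  obtains C where "\<And>\<alpha>. \<alpha> \<in> {0..1} \<Longrightarrow> \<bar>lev_lo Z \<alpha>\<bar> \<le> C \<and> \<bar>lev_hi Z \<alpha>\<bar> \<le> C"
proof -
  obtain B where B: "\<And>\<alpha>. \<alpha> \<in> {0..1} \<Longrightarrow> level Z \<alpha> \<subseteq> {-B..B}"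
    using assms unfolding bounded_levels_def by blast
  define C where "C = max (max \<bar>Inf ({}::real set)\<bar> \<bar>Sup ({}::real set)\<bar>) B"
  have "\<bar>lev_lo Z \<alpha>\<bar> \<le> C \<and> \<bar>lev_hi Z \<alpha>\<bar> \<le> C" if "\<alpha> \<in> {0..1}" for \<alpha>
  proof
    show "\<bar>lev_lo Z \<alpha>\<bar> \<le> C"
      using abs_Inf_le_if_subset_interval[OF B[OF that]]
      unfolding lev_lo_def C_def by (auto simp: le_max_iff_disj)
    show "\<bar>lev_hi Z \<alpha>\<bar> \<le> C"
      using abs_Sup_le_if_subset_interval[OF B[OF that]]
      unfolding lev_hi_def C_def by (auto simp: le_max_iff_disj)
  qed
  then show thesis using that by blast
qed

lemma level_subset_support_closure:
  assumes "\<alpha> \<in> {0..1}"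
  shows "level Z \<alpha> \<subseteq> closure {t. Z t > 0}"
proof (cases "\<alpha> = 0")
  case False
  with assms have "level Z \<alpha> \<subseteq> {t. Z t > 0}" by (auto simp: level_def)
  then show ?thesis using closure_subset by (rule order_trans)
qed (simp add: level_def)

lemma bounded_levels_if_bounded_support:
  assumes "bounded {t. Z t > 0}"
  shows "bounded_levels Z"
proof -
  obtain C where C: "\<And>t. t \<in> closure {t. Z t > 0} \<Longrightarrow> \<bar>t\<bar> \<le> C"
    using assms bounded_closure bounded_iff real_norm_def by metis
  have "level Z \<alpha> \<subseteq> {-C..C}" if "\<alpha> \<in> {0..1}" for \<alpha>
    using C level_subset_support_closure[OF that] by (force simp: abs_le_iff)
  then show ?thesis unfolding bounded_levels_def by blast
qed

lemma fuzzy_number_bounded_levels: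
  assumes "fuzzy_number X"
  shows "bounded_levels X"
proof -
  have "compact (closure {t. X t > 0})" using assms unfolding fuzzy_number_def by blast
  then have "bounded {t. X t > 0}"
    using compact_imp_bounded bounded_subset closure_subset by blast
  then show ?thesis by (rule bounded_levels_if_bounded_support)
qed

lemma fsub_positiveD:
  assumes "fsub X Y t > 0"
  obtains \<alpha> where "0 < \<alpha>" "\<alpha> \<le> 1"
    "lev_lo X \<alpha> - lev_hi Y \<alpha> \<le> t" "t \<le> lev_hi X \<alpha> - lev_lo Y \<alpha>"
proof (rule ccontr)
  assume "\<not> thesis"
  then have no_level: "{\<alpha>. 0 < \<alpha> \<and> \<alpha> \<le> 1 \<and>
      lev_lo X \<alpha> - lev_hi Y \<alpha> \<le> t \<and> t \<le> lev_hi X \<alpha> - lev_lo Y \<alpha>} = {}"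
    using that by blast
  have "fsub X Y t = 0" unfolding fsub_def no_level by simp
  then show False using assms by simp
qed

lemma bounded_levels_fsub:
  assumes "bounded_levels X" "bounded_levels Y"
  shows "bounded_levels (fsub X Y)"
proof -
  obtain C1 where C1: "\<And>\<alpha>. \<alpha> \<in> {0..1} \<Longrightarrow> \<bar>lev_lo X \<alpha>\<bar> \<le> C1 \<and> \<bar>lev_hi X \<alpha>\<bar> \<le> C1"
    using bounded_levels_lev_bounds[OF assms(1)] by blast
  obtain C2 where C2: "\<And>\<alpha>. \<alpha> \<in> {0..1} \<Longrightarrow> \<bar>lev_lo Y \<alpha>\<bar> \<le> C2 \<and> \<bar>lev_hi Y \<alpha>\<bar> \<le> C2"
    using bounded_levels_lev_bounds[OF assms(2)] by blast
  have "{t. fsub X Y t > 0} \<subseteq> {-(C1 + C2)..C1 + C2}"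
  proof
    fix t assume "t \<in> {t. fsub X Y t > 0}"
    then obtain \<alpha> where \<alpha>: "0 < \<alpha>" "\<alpha> \<le> 1"
      and t: "lev_lo X \<alpha> - lev_hi Y \<alpha> \<le> t" "t \<le> lev_hi X \<alpha> - lev_lo Y \<alpha>"
      using fsub_positiveD by blast
    then have "\<alpha> \<in> {0..1}" by simp
    from C1[OF this] C2[OF this] t show "t \<in> {-(C1 + C2)..C1 + C2}" by (auto simp: abs_le_iff)
  qed
  then have "bounded {t. fsub X Y t > 0}" using bounded_closed_interval bounded_subset by blast
  then show ?thesis by (rule bounded_levels_if_bounded_support)
qed

lemma bounded_levels_fdelta:
  assumes "fuzzy_seq X"
  shows "bounded_levels (fdelta m X k)"
  using assms
  by (induction m arbitrary: k)
    (auto simp: fuzzy_seq_def fuzzy_number_bounded_levels bounded_levels_fsub)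

lemma fdist_nonneg:
  assumes "bounded_levels Z" "bounded_levels W"
  shows "0 \<le> fdist Z W"
proof -
  obtain C1 where C1: "\<And>\<alpha>. \<alpha> \<in> {0..1} \<Longrightarrow> \<bar>lev_lo Z \<alpha>\<bar> \<le> C1 \<and> \<bar>lev_hi Z \<alpha>\<bar> \<le> C1"
    using bounded_levels_lev_bounds[OF assms(1)] by blast
  obtain C2 where C2: "\<And>\<alpha>. \<alpha> \<in> {0..1} \<Longrightarrow> \<bar>lev_lo W \<alpha>\<bar> \<le> C2 \<and> \<bar>lev_hi W \<alpha>\<bar> \<le> C2"
    using bounded_levels_lev_bounds[OF assms(2)] by blast
  have "max \<bar>lev_lo Z \<alpha> - lev_lo W \<alpha>\<bar> \<bar>lev_hi Z \<alpha> - lev_hi W \<alpha>\<bar> \<le> C1 + C2"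
    if "\<alpha> \<in> {0..1}" for \<alpha>
    using C1[OF that] C2[OF that] by (auto simp: abs_le_iff)
  then have "bdd_above ((\<lambda>\<alpha>. max \<bar>lev_lo Z \<alpha> - lev_lo W \<alpha>\<bar> \<bar>lev_hi Z \<alpha> - lev_hi W \<alpha>\<bar>) ` {0..1})"
    by (intro bdd_aboveI[where M="C1 + C2"]) blast
  then show ?thesis unfolding fdist_def by (rule cSUP_upper2[where x=0]) auto
qed

lemma modulus_powr_le_split:
  assumes f: "modulus f" and M: "\<And>x. 0 \<le> x \<Longrightarrow> f x \<le> M"
    and q: "0 \<le> h" "h \<le> q" "q \<le> H"
    and x: "0 \<le> x" and \<delta>: "0 < \<delta>" "f \<delta> \<le> 1"
  shows "f x powr q \<le> (if \<delta> \<le> x then max 1 M powr H else 0) + f \<delta> powr h"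
proof -
  have f_nonneg: "0 \<le> f y" if "0 \<le> y" for y using f that unfolding modulus_def by blast
  show ?thesis
  proof (cases "\<delta> \<le> x")
    case True
    have "f x powr q \<le> max 1 M powr q"
      using M[OF x] f_nonneg[OF x] q by (intro powr_mono2) auto
    also have "\<dots> \<le> max 1 M powr H" using q by (intro powr_mono) auto
    finally show ?thesis using True by (simp add: add_increasing2)
  next
    case False
    have "f x \<le> f \<delta>"
      using f x \<delta> False unfolding modulus_def by (auto intro: mono_onD)
    then have "f x powr q \<le> f \<delta> powr q"
      using f_nonneg[OF x] q by (intro powr_mono2) auto
    also have "\<dots> \<le> f \<delta> powr h" using q \<delta> f_nonneg[of \<delta>] by (intro powr_mono') auto
    finally show ?thesis using False by simp
  qed
qed

lemma sum_modulus_powr_le: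
  assumes "finite I" "modulus f" "\<And>x. 0 \<le> x \<Longrightarrow> f x \<le> M"
    and "0 \<le> h" "\<And>k. h \<le> p k" "\<And>k. p k \<le> H" "\<And>k. 0 \<le> d k"
    and "0 < \<delta>" "f \<delta> \<le> 1"
  shows "(\<Sum>k\<in>I. f (d k) powr p k)
    \<le> max 1 M powr H * card {k\<in>I. \<delta> \<le> d k} + card I * f \<delta> powr h"
proof -
  have "(\<Sum>k\<in>I. f (d k) powr p k)
      \<le> (\<Sum>k\<in>I. (if \<delta> \<le> d k then max 1 M powr H else 0) + f \<delta> powr h)"
    using assms by (intro sum_mono modulus_powr_le_split) auto
  also have "\<dots> = max 1 M powr H * card {k\<in>I. \<delta> \<le> d k} + card I * f \<delta> powr h"
    by (simp add: sum.distrib sum.inter_filter[OF \<open>finite I\<close>, symmetric])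
  finally show ?thesis .
qed

lemma modulus_small_value:
  assumes "modulus f" "0 < h" "0 < e"
  obtains \<delta> where "0 < \<delta>" "f \<delta> \<le> 1" "f \<delta> powr h < e"
proof -
  have f0: "(f \<longlongrightarrow> 0) (at_right 0)" and f_nonneg: "\<And>x. 0 \<le> x \<Longrightarrow> 0 \<le> f x"
    using assms(1) unfolding modulus_def by blast+
  have "\<forall>\<^sub>F x in at_right 0. 0 \<le> f x"
    using eventually_at_right_less[of "0::real"] by eventually_elim (simp add: f_nonneg)
  then have "((\<lambda>x. f x powr h) \<longlongrightarrow> 0) (at_right 0)"
    using assms(2) by (intro tendsto_zero_powrI[OF f0]) auto
  then have "\<forall>\<^sub>F x in at_right 0. f x powr h < e" using assms(3) by (rule order_tendstoD(2))
  moreover have "\<forall>\<^sub>F x in at_right 0. f x < 1" using f0 by (rule order_tendstoD(2)) simp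
  moreover note eventually_at_right_less[of "0::real"]
  ultimately have "\<forall>\<^sub>F x in at_right 0. 0 < x \<and> f x \<le> 1 \<and> f x powr h < e"
    by eventually_elim auto
  then show thesis
    using that eventually_happens'[OF trivial_limit_at_right_real] by blast
qed

lemma statistical_imp_strong_modulus_convergence:
  fixes d :: "nat \<Rightarrow> real" and I :: "nat \<Rightarrow> nat set" and D :: "nat \<Rightarrow> real"
  assumes f: "modulus f" "\<And>x. 0 \<le> x \<Longrightarrow> f x \<le> M"
    and p: "0 < h" "\<And>k. h \<le> p k" "\<And>k. p k \<le> H"
    and d: "\<And>k. 0 \<le> d k"
    and I: "\<And>r. finite (I r)" and D: "\<And>r. 0 \<le> D r"
    and ratio: "Bseq (\<lambda>r. card (I r) / D r)"
    and stat: "\<And>\<epsilon>. 0 < \<epsilon> \<Longrightarrow> (\<lambda>r. card {k\<in>I r. \<epsilon> \<le> d k} / D r) \<longlonglongrightarrow> 0"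
  shows "(\<lambda>r. (1 / D r) * (\<Sum>k\<in>I r. f (d k) powr p k)) \<longlonglongrightarrow> 0"
proof (rule order_tendstoI)
  fix a :: real assume "a < 0"
  have "0 \<le> (1 / D r) * (\<Sum>k\<in>I r. f (d k) powr p k)" for r
    using D by (intro mult_nonneg_nonneg sum_nonneg) auto
  then show "\<forall>\<^sub>F r in sequentially. a < (1 / D r) * (\<Sum>k\<in>I r. f (d k) powr p k)"
    using \<open>a < 0\<close> by (intro always_eventually allI) (rule order.strict_trans2)
next
  fix e :: real assume e: "0 < e"
  obtain B where B: "0 < B" "\<And>r. \<bar>card (I r) / D r\<bar> \<le> B"
    using ratio by (auto elim: BseqE)
  have "0 < e / (2 * B)" using e B(1) by simp
  then obtain \<delta> where \<delta>: "0 < \<delta>" "f \<delta> \<le> 1" "f \<delta> powr h < e / (2 * B)"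
    using modulus_small_value[OF f(1) p(1)] by blast
  define K where "K = max 1 M powr H"
  have "(\<lambda>r. K * (card {k\<in>I r. \<delta> \<le> d k} / D r)) \<longlonglongrightarrow> 0"
    using stat[OF \<delta>(1)] by (rule tendsto_mult_right_zero)
  then have "\<forall>\<^sub>F r in sequentially. K * (card {k\<in>I r. \<delta> \<le> d k} / D r) < e / 2"
    using e by (intro order_tendstoD(2)) auto
  then show "\<forall>\<^sub>F r in sequentially. (1 / D r) * (\<Sum>k\<in>I r. f (d k) powr p k) < e"
  proof eventually_elim
    case (elim r)
    have "card (I r) / D r \<le> B" using B(2)[of r] by (rule order_trans[OF abs_ge_self])
    then have "card (I r) / D r * f \<delta> powr h \<le> B * f \<delta> powr h" by (rule mult_right_mono) simp
    also have "\<dots> < e / 2" using \<delta>(3) B(1) by (simp add: field_simps)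
    finally have small: "card (I r) / D r * f \<delta> powr h < e / 2" .
    have "(1 / D r) * (\<Sum>k\<in>I r. f (d k) powr p k)
        \<le> (1 / D r) * (K * card {k\<in>I r. \<delta> \<le> d k} + card (I r) * f \<delta> powr h)"
      unfolding K_def using D[of r] sum_modulus_powr_le[OF I f less_imp_le[OF p(1)] p(2,3) d \<delta>(1,2)]
      by (intro mult_left_mono) auto
    also have "\<dots> = K * (card {k\<in>I r. \<delta> \<le> d k} / D r) + card (I r) / D r * f \<delta> powr h"
      by (simp add: add_divide_distrib)
    also have "\<dots> < e" using elim small by linarith
    finally show ?case .
  qed
qed

theorem theorem3p3:
  fixes f :: "real \<Rightarrow> real" and \<beta> :: real and m :: nat
    and \<theta> :: "nat \<Rightarrow> nat" and p :: "nat \<Rightarrow> real"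
  assumes "modulus f" and "\<exists>M. \<forall>x\<ge>0. f x \<le> M"
    and "0 < \<beta>" and "\<beta> \<le> 1"
    and "lacunary \<theta>"
    and "\<forall>k. 0 < p k" and "0 < Inf (range p)" and "bdd_above (range p)"
    and "(\<lambda>r. real (lac_h \<theta> r) / real (lac_h \<theta> r) powr \<beta>) \<longlonglongrightarrow> 1"
  shows "S_space \<beta> \<theta> m \<subseteq> w_space \<beta> p \<theta> f m"
proof
  fix X assume "X \<in> S_space \<beta> \<theta> m"
  then obtain X0 where X: "fuzzy_seq X" and X0: "fuzzy_number X0"
    and stat: "\<And>\<epsilon>. 0 < \<epsilon> \<Longrightarrow> (\<lambda>r. real (card {k\<in>lac_I \<theta> r. fdist (fdelta m X k) X0 \<ge> \<epsilon>})
      / real (lac_h \<theta> r) powr \<beta>) \<longlonglongrightarrow> 0"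
    unfolding S_space_def by blast
  obtain M where M: "\<And>x. 0 \<le> x \<Longrightarrow> f x \<le> M" using assms(2) by blast
  have "bdd_below (range p)" using assms(6) by (intro bdd_belowI2[where m=0]) (simp add: less_imp_le)
  then have p_bounds: "Inf (range p) \<le> p k" "p k \<le> Sup (range p)" for k
    using assms(8) by (auto intro: cInf_lower cSup_upper)
  have "card (lac_I \<theta> r) = lac_h \<theta> r" for r by (simp add: lac_I_def lac_h_def)
  then have ratio: "Bseq (\<lambda>r. card (lac_I \<theta> r) / real (lac_h \<theta> r) powr \<beta>)"
    using assms(9) by (auto intro: convergent_imp_Bseq convergentI)
  have "(\<lambda>r. (1 / real (lac_h \<theta> r) powr \<beta>) *
      (\<Sum>k\<in>lac_I \<theta> r. f (fdist (fdelta m X k) X0) powr p k)) \<longlonglongrightarrow> 0"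
    using assms(1) M assms(7) p_bounds
      fdist_nonneg[OF bounded_levels_fdelta[OF X] fuzzy_number_bounded_levels[OF X0]]
      ratio stat
    by (intro statistical_imp_strong_modulus_convergence) (auto simp: lac_I_def)
  then show "X \<in> w_space \<beta> p \<theta> f m" unfolding w_space_def using X X0 by blast
qed

end
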